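(* Let $(V,\langle\cdot\,,\cdot\rangle_V)$ be an admissible module and $\Omega_1,\ldots,\Omega_l$ symmetric linear operators on $V$ (i.e. $\langle\Omega_kv,w\rangle_V=\langle v,\Omega_kw\rangle_V$ for all $v,w$) such that $\Omega_k^2=-\mathrm{Id}_V$ for $k=1,\ldots,l$ and $\Omega_k\Omega_j=-\Omega_j\Omega_k$ for all $k\neq j$. Then for any $w\in V$ with $\langle w,w\rangle_V=1$ there is a vector $\tilde w\in V$ satisfying $\langle\tilde w,\Omega_k\tilde w\rangle_V=0$ for all $k=1,\ldots,l$ and $\langle\tilde w,\tilde w\rangle_V=1$.
   Context: A scalar product is a real symmetric non-degenerate bilinear form. An admissible module is a real vector space $V$ which is a module over a Clifford algebra $\mathrm{Cl}_{r,s}$ (generated by $\mathbb R^{r,s}$ with $z^2=-\langle z,z\rangle\cdot1$), with representation $z\mapsto J_z$, together with a scalar product $\langle\cdot\,,\cdot\rangle_V$ satisfying $\langle J_zu,v\rangle_V=-\langle u,J_zv\rangle_V$ for all $z\in\mathbb R^{r,s}$, $u,v\in V$. *)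

theory Defs
  imports "HOL-Analysis.Analysis"
begin

text \<open>The standard scalar product of signature (r,s) on R^{r,s}; vectors of R^{r,s}
  are represented as functions nat => real, of which only the coordinates i < r+s matter.\<close>
definition eta_rs :: "nat \<Rightarrow> nat \<Rightarrow> real" where
  "eta_rs r i = (if i < r then 1 else -1)"

definition ip_rs :: "nat \<Rightarrow> nat \<Rightarrow> (nat \<Rightarrow> real) \<Rightarrow> (nat \<Rightarrow> real) \<Rightarrow> real" where
  "ip_rs r s z w = (\<Sum>i<r+s. eta_rs r i * z i * w i)"

definition scalar_product :: "('v::real_vector \<Rightarrow> 'v \<Rightarrow> real) \<Rightarrow> bool" where
  "scalar_product B \<longleftrightarrow>
     (\<forall>u. linear (B u)) \<and> (\<forall>u v. B u v = B v u) \<and> (\<forall>u. (\<forall>v. B u v = 0) \<longrightarrow> u = 0)"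

text \<open>The representation z |-> J_z, linear in z, determined by the images Jg i of the
  standard basis vectors e_i, i < r+s.\<close>
definition Jz :: "nat \<Rightarrow> nat \<Rightarrow> (nat \<Rightarrow> 'v \<Rightarrow> 'v::real_vector) \<Rightarrow> (nat \<Rightarrow> real) \<Rightarrow> 'v \<Rightarrow> 'v" where
  "Jz r s Jg z v = (\<Sum>i<r+s. z i *\<^sub>R Jg i v)"

definition admissible_module ::
  "nat \<Rightarrow> nat \<Rightarrow> (nat \<Rightarrow> 'v \<Rightarrow> 'v::real_vector) \<Rightarrow> ('v \<Rightarrow> 'v \<Rightarrow> real) \<Rightarrow> bool" where
  "admissible_module r s Jg B \<longleftrightarrow>
     scalar_product B \<and>
     (\<forall>i<r+s. linear (Jg i)) \<and>
     (\<forall>z v. Jz r s Jg z (Jz r s Jg z v) = - (ip_rs r s z z) *\<^sub>R v) \<and>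
     (\<forall>z u v. B (Jz r s Jg z u) v = - B u (Jz r s Jg z v))"

end

theory Submission
  imports Defs
begin

text \<open>On the plane spanned by a unit vector \<open>u\<close> and \<open>\<Omega> u\<close>, where \<open>\<Omega>\<^sup>2 = -1\<close> and \<open>\<Omega>\<close> is
  symmetric, the vector \<open>v = \<alpha> u + \<beta> \<Omega> u\<close> behaves like the complex number \<open>(\<alpha> + i\<beta>)\<^sup>2\<close>:
  \<open>\<langle>v,v\<rangle> + i\<langle>v,\<Omega>v\<rangle> = (\<alpha> + i\<beta>)\<^sup>2 (1 + iq)\<close> with \<open>q = \<langle>u,\<Omega>u\<rangle>\<close>. Taking \<open>\<alpha> + i\<beta>\<close> a square root
  of \<open>1/(1 + iq)\<close> makes \<open>v\<close> a unit vector with \<open>\<langle>v,\<Omega>v\<rangle> = 0\<close>. For every symmetric \<open>P\<close>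
  anticommuting with \<open>\<Omega>\<close> one has \<open>\<langle>v,Pv\<rangle> = (\<alpha>\<^sup>2 + \<beta>\<^sup>2)\<langle>u,Pu\<rangle>\<close>, so the conditions already
  achieved for \<open>\<Omega>\<^sub>1, \<dots>, \<Omega>\<^sub>m\<^sub>-\<^sub>1\<close> survive; induction on \<open>m\<close> finishes the proof.
  Only the scalar product enters.\<close>

lemma real_square_root_pair: "\<exists>\<alpha> \<beta> :: real. \<alpha>\<^sup>2 - \<beta>\<^sup>2 = x \<and> 2 * \<alpha> * \<beta> = y"
proof -
  define z where "z = csqrt (Complex x y)"
  have "z\<^sup>2 = Complex x y" unfolding z_def by simp
  then have "Re z ^ 2 - Im z ^ 2 = x" and "2 * Re z * Im z = y"
    by (metis Re_power2 complex.sel(1), metis Im_power2 complex.sel(2))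
  then show ?thesis by blast
qed

lemma scalar_product_bilinear:
  assumes "scalar_product B"
  shows "bilinear B"
proof -
  have "linear (\<lambda>u. B u v)" for v
  proof -
    have "(\<lambda>u. B u v) = B v"
      using assms by (auto simp: scalar_product_def)
    moreover have "linear (B v)"
      using assms by (simp add: scalar_product_def)
    ultimately show ?thesis by simp
  qed
  then show ?thesis
    using assms unfolding scalar_product_def bilinear_def by auto
qed

lemma scalar_product_commute: "scalar_product B \<Longrightarrow> B u v = B v u"
  unfolding scalar_product_def by blast

lemma bilinear_combination:
  assumes "bilinear B"
  shows "B (a *\<^sub>R u + b *\<^sub>R v) (c *\<^sub>R x + d *\<^sub>R y)
    = a * c * B u x + a * d * B u y + b * c * B v x + b * d * B v y"
  using assms by (simp add: bilinear_ladd bilinear_radd bilinear_lmul bilinear_rmul algebra_simps)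

context
  fixes B :: "'v::real_vector \<Rightarrow> 'v \<Rightarrow> real" and T :: "'v \<Rightarrow> 'v"
  assumes bil: "bilinear B"
    and comm: "\<And>u v. B u v = B v u"
    and lin: "linear T"
    and symm: "\<And>u v. B (T u) v = B u (T v)"
    and sq: "\<And>u. T (T u) = - u"
begin

lemma form_rotated_diagonal:
  "B (\<alpha> *\<^sub>R u + \<beta> *\<^sub>R T u) (\<alpha> *\<^sub>R u + \<beta> *\<^sub>R T u)
    = (\<alpha>\<^sup>2 - \<beta>\<^sup>2) * B u u + 2 * \<alpha> * \<beta> * B u (T u)"
proof -
  have "B (T u) (T u) = - B u u"
    using symm[of u "T u"] sq[of u] bilinear_rneg[OF bil] by simp
  moreover have "B (T u) u = B u (T u)" by (rule comm)
  ultimately show ?thesis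
    by (simp add: bilinear_combination[OF bil] power2_eq_square algebra_simps)
qed

lemma form_rotated_off_diagonal:
  "B (\<alpha> *\<^sub>R u + \<beta> *\<^sub>R T u) (T (\<alpha> *\<^sub>R u + \<beta> *\<^sub>R T u))
    = (\<alpha>\<^sup>2 - \<beta>\<^sup>2) * B u (T u) - 2 * \<alpha> * \<beta> * B u u"
proof -
  have rot: "T (\<alpha> *\<^sub>R u + \<beta> *\<^sub>R T u) = (- \<beta>) *\<^sub>R u + \<alpha> *\<^sub>R T u"
    using lin sq by (simp add: linear_add linear_scale)
  have "B (T u) (T u) = - B u u"
    using symm[of u "T u"] sq[of u] bilinear_rneg[OF bil] by simp
  moreover have "B (T u) u = B u (T u)" by (rule comm)
  ultimately show ?thesis
    unfolding rot bilinear_combination[OF bil] by (simp add: power2_eq_square algebra_simps)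
qed

lemma form_rotated_anticommuting:
  assumes linP: "linear P"
    and symP: "\<And>u v. B (P u) v = B u (P v)"
    and anti: "\<And>u. P (T u) = - T (P u)"
  shows "B (\<alpha> *\<^sub>R u + \<beta> *\<^sub>R T u) (P (\<alpha> *\<^sub>R u + \<beta> *\<^sub>R T u)) = (\<alpha>\<^sup>2 + \<beta>\<^sup>2) * B u (P u)"
proof -
  have cross: "B (T u) (P u) = - B u (P (T u))"
    using symm[of u "P u"] anti[of u] bilinear_rneg[OF bil] by simp
  have "B (T u) (P (T u)) = B u (- T (T (P u)))"
    using symm[of u "P (T u)"] anti[of u] linear_neg[OF lin] by simp
  then have corner: "B (T u) (P (T u)) = B u (P u)"
    using sq by simp
  have image: "P (\<alpha> *\<^sub>R u + \<beta> *\<^sub>R T u) = \<alpha> *\<^sub>R P u + \<beta> *\<^sub>R P (T u)"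
    using linP by (simp add: linear_add linear_scale)
  show ?thesis
    unfolding image bilinear_combination[OF bil] using cross corner
    by (simp add: power2_eq_square algebra_simps)
qed

lemma exists_unit_vector_orthogonal_to_image:
  assumes unit: "B u u = 1"
  shows "\<exists>v. B v v = 1 \<and> B v (T v) = 0 \<and>
    (\<forall>P. linear P \<longrightarrow> (\<forall>x y. B (P x) y = B x (P y)) \<longrightarrow> (\<forall>x. P (T x) = - T (P x))
      \<longrightarrow> B u (P u) = 0 \<longrightarrow> B v (P v) = 0)"
proof -
  define q where "q = B u (T u)"
  have pos: "1 + q\<^sup>2 > 0" by (simp add: add_pos_nonneg)
  obtain \<alpha> \<beta> where re: "\<alpha>\<^sup>2 - \<beta>\<^sup>2 = 1 / (1 + q\<^sup>2)" and im: "2 * \<alpha> * \<beta> = q / (1 + q\<^sup>2)"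
    using real_square_root_pair by blast
  have "(\<alpha>\<^sup>2 - \<beta>\<^sup>2) + 2 * \<alpha> * \<beta> * q = 1" and "(\<alpha>\<^sup>2 - \<beta>\<^sup>2) * q - 2 * \<alpha> * \<beta> = 0"
    using pos unfolding re im by (simp_all add: field_simps power2_eq_square)
  then have "B (\<alpha> *\<^sub>R u + \<beta> *\<^sub>R T u) (\<alpha> *\<^sub>R u + \<beta> *\<^sub>R T u) = 1"
    and "B (\<alpha> *\<^sub>R u + \<beta> *\<^sub>R T u) (T (\<alpha> *\<^sub>R u + \<beta> *\<^sub>R T u)) = 0"
    unfolding form_rotated_diagonal form_rotated_off_diagonal unit q_def by simp_all
  moreover have "B (\<alpha> *\<^sub>R u + \<beta> *\<^sub>R T u) (P (\<alpha> *\<^sub>R u + \<beta> *\<^sub>R T u)) = 0"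
    if "linear P" "\<forall>x y. B (P x) y = B x (P y)" "\<forall>x. P (T x) = - T (P x)" "B u (P u) = 0" for P
    using form_rotated_anticommuting[of P] that by simp
  ultimately show ?thesis by blast
qed

end

lemma exists_unit_vector_orthogonal_to_images:
  fixes B :: "'v::real_vector \<Rightarrow> 'v \<Rightarrow> real" and \<Omega> :: "nat \<Rightarrow> 'v \<Rightarrow> 'v"
  assumes bil: "bilinear B" and comm: "\<And>u v. B u v = B v u"
    and lin: "\<forall>k<l. linear (\<Omega> k)"
    and sym: "\<forall>k<l. \<forall>v u. B (\<Omega> k v) u = B v (\<Omega> k u)"
    and sq: "\<forall>k<l. \<forall>v. \<Omega> k (\<Omega> k v) = - v"
    and anti: "\<forall>k<l. \<forall>j<l. k \<noteq> j \<longrightarrow> (\<forall>v. \<Omega> k (\<Omega> j v) = - \<Omega> j (\<Omega> k v))"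
    and w1: "B w w = 1"
  shows "\<exists>w'. (\<forall>k<l. B w' (\<Omega> k w') = 0) \<and> B w' w' = 1"
  using lin sym sq anti
proof (induction l)
  case 0
  show ?case using w1 by blast
next
  case (Suc l)
  have "\<forall>k<l. linear (\<Omega> k)" and "\<forall>k<l. \<forall>v u. B (\<Omega> k v) u = B v (\<Omega> k u)"
    and "\<forall>k<l. \<forall>v. \<Omega> k (\<Omega> k v) = - v"
    using Suc.prems(1-3) by simp_all
  moreover have "\<forall>k<l. \<forall>j<l. k \<noteq> j \<longrightarrow> (\<forall>v. \<Omega> k (\<Omega> j v) = - \<Omega> j (\<Omega> k v))"
    using Suc.prems(4) less_SucI by blast
  ultimately obtain u where u0: "\<forall>k<l. B u (\<Omega> k u) = 0" and u1: "B u u = 1"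
    using Suc.IH by blast
  have "linear (\<Omega> l)" and "\<And>x y. B (\<Omega> l x) y = B x (\<Omega> l y)" and "\<And>x. \<Omega> l (\<Omega> l x) = - x"
    using Suc.prems(1-3) by simp_all
  from exists_unit_vector_orthogonal_to_image[where T = "\<Omega> l", OF bil comm this u1]
  obtain v where "B v v = 1" and "B v (\<Omega> l v) = 0"
    and keep: "\<And>P. linear P \<Longrightarrow> \<forall>x y. B (P x) y = B x (P y) \<Longrightarrow> \<forall>x. P (\<Omega> l x) = - \<Omega> l (P x)
      \<Longrightarrow> B u (P u) = 0 \<Longrightarrow> B v (P v) = 0"
    by blast
  moreover have "B v (\<Omega> k v) = 0" if k: "k < l" for k
  proof (rule keep)
    show "\<forall>x. \<Omega> k (\<Omega> l x) = - \<Omega> l (\<Omega> k x)"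
      using Suc.prems(4)[rule_format, of k l] k by simp
  qed (use Suc.prems(1,2) u0 k in simp_all)
  ultimately show ?case
    unfolding All_less_Suc by blast
qed

theorem lemma2p9:
  fixes r s l :: nat
    and Jg :: "nat \<Rightarrow> 'v::euclidean_space \<Rightarrow> 'v"
    and B :: "'v \<Rightarrow> 'v \<Rightarrow> real"
    and \<Omega> :: "nat \<Rightarrow> 'v \<Rightarrow> 'v"
    and w :: 'v
  assumes adm: "admissible_module r s Jg B"
    and lin: "\<forall>k<l. linear (\<Omega> k)"
    and sym: "\<forall>k<l. \<forall>v u. B (\<Omega> k v) u = B v (\<Omega> k u)"
    and sq: "\<forall>k<l. \<forall>v. \<Omega> k (\<Omega> k v) = - v"
    and anti: "\<forall>k<l. \<forall>j<l. k \<noteq> j \<longrightarrow> (\<forall>v. \<Omega> k (\<Omega> j v) = - \<Omega> j (\<Omega> k v))"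
    and w1: "B w w = 1"
  shows "\<exists>w'. (\<forall>k<l. B w' (\<Omega> k w') = 0) \<and> B w' w' = 1"
proof -
  have sp: "scalar_product B"
    using adm unfolding admissible_module_def by blast
  show ?thesis
    by (rule exists_unit_vector_orthogonal_to_images
        [OF scalar_product_bilinear[OF sp] scalar_product_commute[OF sp] lin sym sq anti w1])
qed

end
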